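(* Let $n_0,n_1,r$ be positive integers. If there exist integers $t$ and $l$ with $t\ge r$ and $0\le l\le t$ such that $$2^t e^{-\frac{(l)_r}{(t)_r}n_1}+2^t e^{-\frac{(t-l)_r}{(t)_r}n_0}\le 1,$$ then $ch(K_{n_0,n_1})>r$.
   Context: For an integer $a$ and a positive integer $r$, $(a)_r=a(a-1)\cdots(a-r+1)$ denotes the falling factorial. For a graph $G=(V,E)$, the choice number $ch(G)$ is the minimum integer $k$ such that for every assignment of a list $S(v)$ of at least $k$ colors to each vertex $v\in V$, there is a proper vertex coloring of $G$ assigning to each vertex $v$ a color from $S(v)$. $K_{n_0,n_1}$ denotes the complete bipartite graph with parts of sizes $n_0$ and $n_1$. *)

theory Defs
  imports Complex_Main
begin

definition falling_fact :: "int \<Rightarrow> nat \<Rightarrow> int" where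
  "falling_fact a r = (\<Prod>i<r. a - int i)"

definition choosable :: "'v set \<Rightarrow> ('v \<Rightarrow> 'v \<Rightarrow> bool) \<Rightarrow> nat \<Rightarrow> bool" where
  "choosable V E k \<longleftrightarrow>
     (\<forall>S :: 'v \<Rightarrow> nat set. (\<forall>v\<in>V. finite (S v) \<and> card (S v) \<ge> k) \<longrightarrow>
        (\<exists>c. (\<forall>v\<in>V. c v \<in> S v) \<and> (\<forall>u\<in>V. \<forall>v\<in>V. E u v \<longrightarrow> c u \<noteq> c v)))"

definition choice_number :: "'v set \<Rightarrow> ('v \<Rightarrow> 'v \<Rightarrow> bool) \<Rightarrow> nat" where
  "choice_number V E = (LEAST k. choosable V E k)"

definition Kbip_V :: "nat \<Rightarrow> nat \<Rightarrow> (nat + nat) set" where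
  "Kbip_V n0 n1 = Inl ` {..<n0} \<union> Inr ` {..<n1}"

definition Kbip_E :: "nat + nat \<Rightarrow> nat + nat \<Rightarrow> bool" where
  "Kbip_E u v \<longleftrightarrow> (case (u, v) of (Inl _, Inr _) \<Rightarrow> True | (Inr _, Inl _) \<Rightarrow> True | _ \<Rightarrow> False)"

end

theory Submission
  imports Defs "HOL-Library.FuncSet"
begin

text \<open>Give every vertex of \<open>K\<^sub>n\<^sub>0\<^sub>,\<^sub>n\<^sub>1\<close> an \<open>r\<close>-subset of a \<open>t\<close>-set \<open>T\<close> of colours.
  In a proper colouring, let \<open>X\<close> be the set of colours used on the \<open>n0\<close>-side: every list
  of that side meets \<open>X\<close>, and no list of the other side lies inside \<open>X\<close>. Count the
  assignments for which some \<open>X \<subseteq> T\<close> has both properties. If \<open>|X| \<ge> l\<close>, each of the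
  \<open>n1\<close> lists avoids the at least \<open>(l)\<^sub>r/r!\<close> \<open>r\<close>-subsets of \<open>X\<close>; if \<open>|X| < l\<close>,
  each of the \<open>n0\<close> lists avoids the at least \<open>(t-l)\<^sub>r/r!\<close> \<open>r\<close>-subsets of \<open>T - X\<close>.
  With \<open>(1 - p)\<^sup>n < e\<^sup>-\<^sup>p\<^sup>n\<close> and a union bound over the \<open>2\<^sup>t\<close> sets \<open>X\<close>, the
  hypothesis leaves an assignment admitting no proper colouring.\<close>

lemma choosable_mono:
  assumes "choosable V E k" and "k \<le> k'"
  shows "choosable V E k'"
  unfolding choosable_def
proof (intro allI impI)
  fix S :: "'a \<Rightarrow> nat set"
  assume "\<forall>v\<in>V. finite (S v) \<and> k' \<le> card (S v)"
  then have "\<forall>v\<in>V. finite (S v) \<and> k \<le> card (S v)"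
    using assms(2) by auto
  then show "\<exists>c. (\<forall>v\<in>V. c v \<in> S v) \<and> (\<forall>u\<in>V. \<forall>v\<in>V. E u v \<longrightarrow> c u \<noteq> c v)"
    using assms(1) unfolding choosable_def by blast
qed

lemma choice_number_gt:
  assumes "choosable V E k" and "\<not> choosable V E r"
  shows "r < choice_number V E"
proof -
  have "choosable V E (choice_number V E)"
    unfolding choice_number_def using assms(1) by (rule LeastI)
  then show ?thesis
    using assms(2) choosable_mono by (metis not_le)
qed

lemma ex_in_diff_if_card_less:
  assumes "finite B" and "card B < card A"
  shows "\<exists>x. x \<in> A - B"
proof (rule ccontr)
  assume "\<nexists>x. x \<in> A - B"
  then have "A \<subseteq> B"
    by blast
  then show False
    using assms card_mono[of B A] by simp
qed

lemma choosable_Kbip_Suc: "choosable (Kbip_V n0 n1) Kbip_E (Suc n0)"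
  unfolding choosable_def
proof (intro allI impI)
  fix S :: "nat + nat \<Rightarrow> nat set"
  assume S: "\<forall>v\<in>Kbip_V n0 n1. finite (S v) \<and> Suc n0 \<le> card (S v)"
  have S_Inl: "finite (S (Inl i)) \<and> Suc n0 \<le> card (S (Inl i))" if "i < n0" for i
    using S that unfolding Kbip_V_def by blast
  have S_Inr: "finite (S (Inr j)) \<and> Suc n0 \<le> card (S (Inr j))" if "j < n1" for j
    using S that unfolding Kbip_V_def by blast
  have "\<exists>x. x \<in> S (Inl i) - {}" if "i < n0" for i
    using S_Inl[OF that] by (intro ex_in_diff_if_card_less) auto
  then obtain f where f: "\<And>i. i < n0 \<Longrightarrow> f i \<in> S (Inl i)"
    by (metis Diff_empty)
  have "\<exists>x. x \<in> S (Inr j) - f ` {..<n0}" if "j < n1" for j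
    using S_Inr[OF that] card_image_le[of "{..<n0}" f] by (intro ex_in_diff_if_card_less) auto
  then obtain g where g: "\<And>j. j < n1 \<Longrightarrow> g j \<in> S (Inr j) - f ` {..<n0}"
    by metis
  have fresh: "f i \<noteq> g j" if "i < n0" and "j < n1" for i j
    using g[OF that(2)] that(1) by (metis DiffD2 image_eqI lessThan_iff)
  show "\<exists>c. (\<forall>v\<in>Kbip_V n0 n1. c v \<in> S v) \<and>
      (\<forall>u\<in>Kbip_V n0 n1. \<forall>v\<in>Kbip_V n0 n1. Kbip_E u v \<longrightarrow> c u \<noteq> c v)"
  proof (intro exI conjI)
    show "\<forall>v\<in>Kbip_V n0 n1. case_sum f g v \<in> S v"
      using f g unfolding Kbip_V_def by auto
    show "\<forall>u\<in>Kbip_V n0 n1. \<forall>v\<in>Kbip_V n0 n1. Kbip_E u v \<longrightarrow> case_sum f g u \<noteq> case_sum f g v"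
      using fresh fresh[THEN not_sym] unfolding Kbip_V_def Kbip_E_def by (auto split: sum.splits)
  qed
qed
text \<open>\<open>X\<close> plays the set of colours used on the \<open>n0\<close>-side: some list \<open>A i\<close> of that side
  misses \<open>X\<close>, or some list \<open>B j\<close> of the other side has no colour outside \<open>X\<close>.\<close>
definition blocking_lists :: "nat \<Rightarrow> nat \<Rightarrow> nat \<Rightarrow> (nat \<Rightarrow> 'a set) \<Rightarrow> (nat \<Rightarrow> 'a set) \<Rightarrow> bool" where
  "blocking_lists n0 n1 r A B \<longleftrightarrow>
     (\<forall>i<n0. finite (A i) \<and> card (A i) = r) \<and> (\<forall>j<n1. finite (B j) \<and> card (B j) = r) \<and>
     (\<forall>X. (\<exists>i<n0. A i \<inter> X = {}) \<or> (\<exists>j<n1. B j \<subseteq> X))"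

lemma not_choosable_Kbip_if_blocking_lists:
  fixes A B :: "nat \<Rightarrow> nat set"
  assumes "blocking_lists n0 n1 r A B"
  shows "\<not> choosable (Kbip_V n0 n1) Kbip_E r"
proof
  assume "choosable (Kbip_V n0 n1) Kbip_E r"
  moreover have "\<forall>v\<in>Kbip_V n0 n1. finite (case_sum A B v) \<and> r \<le> card (case_sum A B v)"
    using assms unfolding blocking_lists_def Kbip_V_def by auto
  ultimately obtain c where
      c_in: "\<forall>v\<in>Kbip_V n0 n1. c v \<in> case_sum A B v" and
      c_proper: "\<forall>u\<in>Kbip_V n0 n1. \<forall>v\<in>Kbip_V n0 n1. Kbip_E u v \<longrightarrow> c u \<noteq> c v"
    unfolding choosable_def by blast
  define X where "X = c ` Inl ` {..<n0}"
  from assms consider i where "i < n0" "A i \<inter> X = {}" | j where "j < n1" "B j \<subseteq> X"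
    unfolding blocking_lists_def by blast
  then show False
  proof cases
    case 1
    then have "Inl i \<in> Kbip_V n0 n1"
      by (simp add: Kbip_V_def)
    then have "c (Inl i) \<in> A i"
      using c_in by fastforce
    with 1 show False
      unfolding X_def by blast
  next
    case 2
    then have "Inr j \<in> Kbip_V n0 n1"
      by (simp add: Kbip_V_def)
    then have "c (Inr j) \<in> X"
      using c_in 2(2) by fastforce
    then obtain i where "i < n0" "c (Inr j) = c (Inl i)"
      unfolding X_def by auto
    then show False
      using c_proper 2(1) unfolding Kbip_V_def Kbip_E_def by auto
  qed
qed

lemma card_subsets_not_subset:
  assumes "finite T" and "Y \<subseteq> T"
  shows "card {A. A \<subseteq> T \<and> card A = r \<and> \<not> A \<subseteq> Y} = (card T choose r) - (card Y choose r)"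
proof -
  have "{A. A \<subseteq> T \<and> card A = r \<and> \<not> A \<subseteq> Y} = {A. A \<subseteq> T \<and> card A = r} - {A. A \<subseteq> Y \<and> card A = r}"
    using assms(2) by auto
  moreover have "{A. A \<subseteq> Y \<and> card A = r} \<subseteq> {A. A \<subseteq> T \<and> card A = r}"
    using assms(2) by auto
  moreover have "finite Y"
    using assms finite_subset by blast
  ultimately show ?thesis
    using assms by (simp add: card_Diff_subset n_subsets)
qed

lemma card_PiE_subsets_not_subset_le:
  assumes "finite T" and "Y \<subseteq> T" and "k \<le> card Y"
  shows "card (\<Pi>\<^sub>E i\<in>{..<n}. {A. A \<subseteq> T \<and> card A = r \<and> \<not> A \<subseteq> Y})
    \<le> ((card T choose r) - (k choose r)) ^ n"
  using assms by (simp add: card_PiE card_subsets_not_subset power_mono diff_le_mono2 binomial_right_mono)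

lemma exists_notin_UN_of_card_le:
  assumes "finite I" and "finite \<Omega>" and "\<And>x. x \<in> I \<Longrightarrow> B x \<subseteq> \<Omega>"
    and "\<And>x. x \<in> I \<Longrightarrow> card (B x) \<le> b" and "card I * b < card \<Omega>"
  obtains \<omega> where "\<omega> \<in> \<Omega>" and "\<And>x. x \<in> I \<Longrightarrow> \<omega> \<notin> B x"
proof -
  have "card (\<Union>x\<in>I. B x) \<le> (\<Sum>x\<in>I. card (B x))"
    using assms(1) by (rule card_UN_le)
  also have "\<dots> \<le> card I * b"
    using assms(4) sum_bounded_above[of I "\<lambda>x. card (B x)" b] by simp
  finally have "\<not> \<Omega> \<subseteq> (\<Union>x\<in>I. B x)"
    using assms(1,2,3,5) card_mono[of "\<Union>x\<in>I. B x" \<Omega>] by (metis finite_UN finite_subset not_le order_trans)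
  then show thesis
    using that by blast
qed

lemma card_not_blocking_at_le:
  fixes T X :: "'a set" and r :: nat
  defines "R \<equiv> {A. A \<subseteq> T \<and> card A = r}" and "M \<equiv> card T choose r"
  assumes "finite T" and "X \<subseteq> T" and "l \<le> card T"
  shows "card {(A, B) \<in> (\<Pi>\<^sub>E i\<in>{..<n0}. R) \<times> (\<Pi>\<^sub>E j\<in>{..<n1}. R).
              (\<forall>i<n0. A i \<inter> X \<noteq> {}) \<and> (\<forall>j<n1. \<not> B j \<subseteq> X)}
    \<le> M ^ n0 * (M - (l choose r)) ^ n1 + M ^ n1 * (M - ((card T - l) choose r)) ^ n0"
    (is "card ?Bad \<le> ?a + ?b")
proof -
  have finite_PiE_subsets: "finite (\<Pi>\<^sub>E i\<in>{..<n}. {A. A \<subseteq> T \<and> Q A})" for n :: nat and Q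
    using assms(3) by (intro finite_PiE) (auto intro: finite_subset[of _ "Pow T"])
  have card_PiE_R: "card (\<Pi>\<^sub>E i\<in>{..<n}. R) = M ^ n" for n :: nat
    using assms(3) by (simp add: R_def M_def card_PiE n_subsets)
  show ?thesis
  proof (cases "l \<le> card X")
    case True
    let ?Q = "\<Pi>\<^sub>E j\<in>{..<n1}. {A. A \<subseteq> T \<and> card A = r \<and> \<not> A \<subseteq> X}"
    have "?Bad \<subseteq> (\<Pi>\<^sub>E i\<in>{..<n0}. R) \<times> ?Q"
      unfolding R_def by (force simp: PiE_iff)
    then have "card ?Bad \<le> card ((\<Pi>\<^sub>E i\<in>{..<n0}. R) \<times> ?Q)"
      by (intro card_mono finite_cartesian_product) (simp_all add: R_def finite_PiE_subsets)
    also have "\<dots> \<le> ?a"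
      using card_PiE_subsets_not_subset_le[OF assms(3,4) True]
      by (simp add: card_cartesian_product card_PiE_R M_def)
    finally show ?thesis
      by simp
  next
    case False
    let ?P = "\<Pi>\<^sub>E i\<in>{..<n0}. {A. A \<subseteq> T \<and> card A = r \<and> \<not> A \<subseteq> T - X}"
    have "?Bad \<subseteq> ?P \<times> (\<Pi>\<^sub>E j\<in>{..<n1}. R)"
      unfolding R_def by (force simp: PiE_iff)
    then have "card ?Bad \<le> card (?P \<times> (\<Pi>\<^sub>E j\<in>{..<n1}. R))"
      by (intro card_mono finite_cartesian_product) (simp_all add: R_def finite_PiE_subsets)
    also have "\<dots> \<le> ?b"
      using card_PiE_subsets_not_subset_le[of T "T - X" "card T - l" n0 r] assms(3,4) False
      by (simp add: card_cartesian_product card_PiE_R M_def card_Diff_subset finite_subset mult.commute)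
    finally show ?thesis
      by simp
  qed
qed

lemma exists_blocking_lists:
  fixes T :: "'a set" and r :: nat
  defines "M \<equiv> card T choose r"
  assumes "finite T" and "l \<le> card T"
    and "2 ^ card T * (M ^ n0 * (M - (l choose r)) ^ n1 + M ^ n1 * (M - ((card T - l) choose r)) ^ n0)
      < M ^ (n0 + n1)"
  obtains A B :: "nat \<Rightarrow> 'a set" where "blocking_lists n0 n1 r A B"
proof -
  define R where "R = {A. A \<subseteq> T \<and> card A = r}"
  define \<Omega> where "\<Omega> = (\<Pi>\<^sub>E i\<in>{..<n0}. R) \<times> (\<Pi>\<^sub>E j\<in>{..<n1}. R)"
  define Bad where "Bad X = {(A, B) \<in> \<Omega>. (\<forall>i<n0. A i \<inter> X \<noteq> {}) \<and> (\<forall>j<n1. \<not> B j \<subseteq> X)}" for X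
  define b where "b = M ^ n0 * (M - (l choose r)) ^ n1 + M ^ n1 * (M - ((card T - l) choose r)) ^ n0"
  have "finite R"
    using assms(2) unfolding R_def by (auto intro: finite_subset[of _ "Pow T"])
  then have "finite \<Omega>"
    unfolding \<Omega>_def by (intro finite_cartesian_product finite_PiE) auto
  have "card \<Omega> = M ^ (n0 + n1)"
    using assms(2) by (simp add: \<Omega>_def R_def M_def card_cartesian_product card_PiE n_subsets power_add)
  then have "card (Pow T) * b < card \<Omega>"
    using assms(2,4) by (simp add: b_def card_Pow)
  moreover have "card (Bad X) \<le> b" if "X \<in> Pow T" for X
    using card_not_blocking_at_le[where r = r and ?n0.0 = n0 and ?n1.0 = n1, OF assms(2) _ assms(3)] that
    unfolding Bad_def \<Omega>_def R_def M_def b_def by simp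
  ultimately obtain \<omega> where "\<omega> \<in> \<Omega>" and good: "\<And>X. X \<in> Pow T \<Longrightarrow> \<omega> \<notin> Bad X"
    using exists_notin_UN_of_card_le[of "Pow T" \<Omega> Bad] assms(2) \<open>finite \<Omega>\<close>
    unfolding Bad_def by blast
  obtain A B where \<omega>: "\<omega> = (A, B)"
    by fastforce
  have A: "\<And>i. i < n0 \<Longrightarrow> A i \<subseteq> T \<and> card (A i) = r"
    and B: "\<And>j. j < n1 \<Longrightarrow> B j \<subseteq> T \<and> card (B j) = r"
    using \<open>\<omega> \<in> \<Omega>\<close> unfolding \<omega> \<Omega>_def R_def by auto
  have "\<forall>X. (\<exists>i<n0. A i \<inter> X = {}) \<or> (\<exists>j<n1. B j \<subseteq> X)"
  proof
    fix X
    have "(A, B) \<notin> Bad (X \<inter> T)"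
      using good \<omega> by blast
    then have "(\<exists>i<n0. A i \<inter> (X \<inter> T) = {}) \<or> (\<exists>j<n1. B j \<subseteq> X \<inter> T)"
      using \<open>\<omega> \<in> \<Omega>\<close> unfolding Bad_def \<omega> by auto
    then show "(\<exists>i<n0. A i \<inter> X = {}) \<or> (\<exists>j<n1. B j \<subseteq> X)"
      using A by blast
  qed
  moreover have "finite (A i) \<and> card (A i) = r" if "i < n0" for i
    using A[OF that] assms(2) finite_subset by blast
  moreover have "finite (B j) \<and> card (B j) = r" if "j < n1" for j
    using B[OF that] assms(2) finite_subset by blast
  ultimately have "blocking_lists n0 n1 r A B"
    unfolding blocking_lists_def by blast
  then show thesis
    by (rule that)
qed

lemma power_diff_less_exp:
  fixes k M n :: nat
  assumes "0 < k" and "k \<le> M" and "0 < n"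
  shows "real (M - k) ^ n < real M ^ n * exp (- (real k / real M) * real n)"
proof -
  define p where "p = real k / real M"
  have p: "0 < p" "p \<le> 1"
    using assms by (auto simp: p_def)
  have "real (M - k) = real M * (1 - p)"
    using assms by (simp add: p_def of_nat_diff field_simps)
  moreover have "(1 - p) ^ n < exp (- p) ^ n"
    using p assms(3) exp_minus_greater[of p] by (intro power_strict_mono) auto
  moreover have "0 < real M"
    using assms by simp
  ultimately show ?thesis
    by (simp add: p_def power_mult_distrib exp_of_nat_mult[symmetric] mult.commute)
qed

lemma counting_bound_of_exp_bound:
  fixes t l r n0 n1 :: nat
  defines "M \<equiv> t choose r"
  assumes "l \<le> t" and "r \<le> t" and "0 < n0" and "0 < n1"
    and bound: "2 ^ t * exp (- (real (l choose r) / real M) * real n1)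
      + 2 ^ t * exp (- (real ((t - l) choose r) / real M) * real n0) \<le> 1"
  shows "2 ^ t * (M ^ n0 * (M - (l choose r)) ^ n1 + M ^ n1 * (M - ((t - l) choose r)) ^ n0)
    < M ^ (n0 + n1)"
proof -
  have "0 < M"
    using assms(3) by (simp add: M_def)
  have le_M: "l choose r \<le> M" "(t - l) choose r \<le> M"
    by (simp_all add: M_def binomial_right_mono assms(2))
  have "0 < (2::real) ^ t * exp x" for x
    by simp
  then have "2 ^ t * exp (- (real (l choose r) / real M) * real n1) < (1::real)"
    and "2 ^ t * exp (- (real ((t - l) choose r) / real M) * real n0) < (1::real)"
    using bound by (smt (verit))+
  moreover have "0 < k" if "2 ^ t * exp (- (real k / real M) * real n) < (1::real)" for k n
    using that by (cases "k = 0") (simp_all add: power_less_one_iff)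
  ultimately have "0 < l choose r" and "0 < (t - l) choose r"
    by blast+
  have "real (2 ^ t * (M ^ n0 * (M - (l choose r)) ^ n1 + M ^ n1 * (M - ((t - l) choose r)) ^ n0))
      = 2 ^ t * (real M ^ n0 * real (M - (l choose r)) ^ n1 + real M ^ n1 * real (M - ((t - l) choose r)) ^ n0)"
    by simp
  also have "\<dots> < 2 ^ t * (real M ^ n0 * (real M ^ n1 * exp (- (real (l choose r) / real M) * real n1))
      + real M ^ n1 * (real M ^ n0 * exp (- (real ((t - l) choose r) / real M) * real n0)))"
    using power_diff_less_exp[OF \<open>0 < l choose r\<close> le_M(1) assms(5)]
      power_diff_less_exp[OF \<open>0 < (t - l) choose r\<close> le_M(2) assms(4)] \<open>0 < M\<close>
    by (intro mult_strict_left_mono add_strict_mono) simp_all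
  also have "\<dots> = real M ^ (n0 + n1) * (2 ^ t * exp (- (real (l choose r) / real M) * real n1)
      + 2 ^ t * exp (- (real ((t - l) choose r) / real M) * real n0))"
    by (simp add: power_add algebra_simps)
  also have "\<dots> \<le> real M ^ (n0 + n1)"
    using bound by (simp add: mult_left_le)
  finally show ?thesis
    by (simp only: of_nat_power[symmetric] of_nat_less_iff)
qed

lemma falling_fact_of_nat: "real_of_int (falling_fact (int n) r) = fact r * real (n choose r)"
  by (simp add: falling_fact_def binomial_gbinomial gbinomial_mult_fact atLeast0LessThan)

lemma falling_fact_ratio_of_nat:
  "real_of_int (falling_fact (int m) r) / real_of_int (falling_fact (int n) r)
    = real (m choose r) / real (n choose r)"
  by (simp add: falling_fact_of_nat)

theorem lemma3p1:
  fixes n0 n1 r :: nat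
  assumes "n0 > 0" and "n1 > 0" and "r > 0"
    and "\<exists>t l :: int. t \<ge> int r \<and> 0 \<le> l \<and> l \<le> t \<and>
           2 powr (real_of_int t) * exp (- (real_of_int (falling_fact l r) / real_of_int (falling_fact t r)) * real n1)
         + 2 powr (real_of_int t) * exp (- (real_of_int (falling_fact (t - l) r) / real_of_int (falling_fact t r)) * real n0)
         \<le> 1"
  shows "choice_number (Kbip_V n0 n1) Kbip_E > r"
  using assms(4)
proof (elim exE conjE, goal_cases)
  case (1 t l)
  then obtain t' l' :: nat where t: "t = int t'" and l: "l = int l'"
    by (metis nonneg_int_cases of_nat_0_le_iff order_trans)
  have "r \<le> t'" and "l' \<le> t'"
    using 1(1,3) t l by simp_all
  have diff: "int t' - int l' = int (t' - l')" and pow: "2 powr real_of_int (int t') = 2 ^ t'"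
    using \<open>l' \<le> t'\<close> by (simp_all add: powr_realpow)
  have "2 ^ t' * exp (- (real (l' choose r) / real (t' choose r)) * real n1)
      + 2 ^ t' * exp (- (real ((t' - l') choose r) / real (t' choose r)) * real n0) \<le> 1"
    using 1(4) unfolding t l diff pow falling_fact_ratio_of_nat .
  then have "2 ^ t' * ((t' choose r) ^ n0 * ((t' choose r) - (l' choose r)) ^ n1
      + (t' choose r) ^ n1 * ((t' choose r) - ((t' - l') choose r)) ^ n0) < (t' choose r) ^ (n0 + n1)"
    by (rule counting_bound_of_exp_bound[OF \<open>l' \<le> t'\<close> \<open>r \<le> t'\<close> assms(1,2)])
  then obtain A B :: "nat \<Rightarrow> nat set" where "blocking_lists n0 n1 r A B"
    using exists_blocking_lists[of "{..<t'}" l' r n0 n1] \<open>l' \<le> t'\<close> by auto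
  then show ?thesis
    using choice_number_gt[OF choosable_Kbip_Suc] not_choosable_Kbip_if_blocking_lists by blast
qed

end
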